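(* Let $(P_{ij})$ be an $(m+1)\times(d+1)$ non-negative matrix (indices $i\in\{0,\dots,m\}$, $j\in\{0,\dots,d\}$, $d\ge1$) with $\sum_iP_{ij}=1$ for all $j$, and let $P:\mathbb{R}^{d+1}_0\to\mathbb{R}^{m+1}_0$ be the associated linear map. Suppose there exists $\theta>0$ such that for every pair $j_1,j_2\in\{0,\dots,d\}$ there exists $i_0\in\{0,\dots,m\}$ with $P_{i_0j_1}\ge\theta$ and $P_{i_0j_2}\ge\theta$. Then the operator norm satisfies $\|P\|\le 1-\theta/d$.
   Context: $\mathbb{R}^n$ carries the $L^1$ norm $\|a\|=\sum_i|a_i|$, and $\mathbb{R}^n_0=\{a\in\mathbb{R}^n:\sum_ia_i=0\}$. Since column sums of $P$ are $1$, $P$ maps $\mathbb{R}^{d+1}_0$ into $\mathbb{R}^{m+1}_0$; the norm is taken with respect to the $L^1$ norms on these subspaces. *)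

theory Defs
  imports Complex_Main
begin

text \<open>Vectors in R^{n+1} are represented as functions nat => real indexed by 0..n,
  vanishing outside {0..n}.  Matrices (m+1)x(d+1) as functions nat => nat => real.\<close>

definition l1norm :: "nat \<Rightarrow> (nat \<Rightarrow> real) \<Rightarrow> real" where
  "l1norm n x = (\<Sum>i\<le>n. \<bar>x i\<bar>)"

definition zero_sum_space :: "nat \<Rightarrow> (nat \<Rightarrow> real) set" where
  "zero_sum_space n = {x. (\<forall>i>n. x i = 0) \<and> (\<Sum>i\<le>n. x i) = 0}"

definition matvec :: "nat \<Rightarrow> nat \<Rightarrow> (nat \<Rightarrow> nat \<Rightarrow> real) \<Rightarrow> (nat \<Rightarrow> real) \<Rightarrow> (nat \<Rightarrow> real)" where
  "matvec m d P x = (\<lambda>i. if i \<le> m then (\<Sum>j\<le>d. P i j * x j) else 0)"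

definition opnorm0 :: "nat \<Rightarrow> nat \<Rightarrow> (nat \<Rightarrow> nat \<Rightarrow> real) \<Rightarrow> real" where
  "opnorm0 m d P = (SUP x \<in> zero_sum_space d - {(\<lambda>_. 0)}. l1norm m (matvec m d P x) / l1norm d x)"

end

theory Submission
  imports Defs
begin

text \<open>Split a zero-sum vector x into its positive and negative parts, both of mass S, so that
  \<open>\<parallel>x\<parallel> = 2S\<close>. Then \<open>S \<cdot> P x = \<Sum>\<^sub>j\<^sub>k x\<^sup>+\<^sub>j x\<^sup>-\<^sub>k (P e\<^sub>j - P e\<^sub>k)\<close>, and any two columns of P,
  being probability vectors sharing a coordinate of size at least \<theta>, are at L1 distance at most
  \<open>2 - 2\<theta>\<close>. Hence \<open>S \<parallel>P x\<parallel> \<le> S\<^sup>2 (2 - 2\<theta>)\<close>, i.e. \<open>\<parallel>P x\<parallel> \<le> (1 - \<theta>) \<parallel>x\<parallel> \<le> (1 - \<theta>/d) \<parallel>x\<parallel>\<close>.\<close>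

lemma sum_abs_diff_le_overlap:
  fixes p q :: "'a \<Rightarrow> real"
  assumes "finite A" and "\<And>i. i \<in> A \<Longrightarrow> p i \<ge> 0" and "\<And>i. i \<in> A \<Longrightarrow> q i \<ge> 0"
    and "sum p A = 1" and "sum q A = 1"
    and "i0 \<in> A" and "\<theta> \<le> p i0" and "\<theta> \<le> q i0"
  shows "(\<Sum>i\<in>A. \<bar>p i - q i\<bar>) \<le> 2 - 2 * \<theta>"
proof -
  have abs_diff: "\<bar>p i - q i\<bar> = p i + q i - 2 * min (p i) (q i)" for i
    by (simp add: min_def abs_if)
  have "\<theta> \<le> min (p i0) (q i0)"
    using assms(7,8) by simp
  also have "\<dots> \<le> (\<Sum>i\<in>A. min (p i) (q i))"
    using assms(1-3,6) by (intro member_le_sum) auto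
  finally have "\<theta> \<le> (\<Sum>i\<in>A. min (p i) (q i))" .
  moreover have "(\<Sum>i\<in>A. \<bar>p i - q i\<bar>) = sum p A + sum q A - 2 * (\<Sum>i\<in>A. min (p i) (q i))"
    by (simp add: abs_diff sum.distrib sum_subtractf sum_distrib_left)
  ultimately show ?thesis
    using assms(4,5) by linarith
qed

lemma sum_neg_part_eq_sum_pos_part:
  fixes x :: "'a \<Rightarrow> real"
  assumes "sum x J = 0"
  shows "(\<Sum>j\<in>J. max (- x j) 0) = (\<Sum>j\<in>J. max (x j) 0)"
proof -
  have "sum x J = (\<Sum>j\<in>J. max (x j) 0 - max (- x j) 0)"
    by (intro sum.cong) (auto simp: max_def)
  with assms show ?thesis
    by (simp add: sum_subtractf)
qed

lemma sum_abs_eq_twice_sum_pos_part: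
  fixes x :: "'a \<Rightarrow> real"
  assumes "sum x J = 0"
  shows "(\<Sum>j\<in>J. \<bar>x j\<bar>) = 2 * (\<Sum>j\<in>J. max (x j) 0)"
proof -
  have "(\<Sum>j\<in>J. \<bar>x j\<bar>) = (\<Sum>j\<in>J. max (x j) 0 + max (- x j) 0)"
    by (intro sum.cong) (auto simp: max_def)
  then show ?thesis
    by (simp add: sum.distrib sum_neg_part_eq_sum_pos_part[OF assms])
qed

lemma pos_part_mass_mult_sum_eq:
  fixes x a :: "'a \<Rightarrow> real"
  assumes "sum x J = 0"
  shows "(\<Sum>j\<in>J. max (x j) 0) * (\<Sum>j\<in>J. a j * x j)
    = (\<Sum>j\<in>J. \<Sum>k\<in>J. max (x j) 0 * max (- x k) 0 * (a j - a k))"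
proof -
  define xp where "xp j = max (x j) 0" for j
  define xn where "xn j = max (- x j) 0" for j
  have x_eq: "x j = xp j - xn j" for j
    by (simp add: xp_def xn_def max_def)
  have mass: "sum xn J = sum xp J"
    unfolding xp_def xn_def using sum_neg_part_eq_sum_pos_part[OF assms] .
  have "(\<Sum>j\<in>J. \<Sum>k\<in>J. xp j * xn k * (a j - a k))
      = (\<Sum>j\<in>J. \<Sum>k\<in>J. xn k * (xp j * a j)) - (\<Sum>j\<in>J. \<Sum>k\<in>J. xp j * (xn k * a k))"
    by (simp add: algebra_simps sum_subtractf)
  also have "\<dots> = sum xp J * (\<Sum>j\<in>J. xp j * a j) - sum xp J * (\<Sum>k\<in>J. xn k * a k)"
    by (simp add: sum_distrib_left[symmetric] sum_distrib_right[symmetric] mass mult.commute)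
  also have "\<dots> = sum xp J * (\<Sum>j\<in>J. a j * x j)"
    by (simp add: x_eq algebra_simps sum_subtractf)
  finally show ?thesis
    by (simp add: xp_def xn_def)
qed

lemma pos_part_mass_mult_abs_sum_le:
  fixes x a :: "'a \<Rightarrow> real"
  assumes "sum x J = 0"
  shows "(\<Sum>j\<in>J. max (x j) 0) * \<bar>\<Sum>j\<in>J. a j * x j\<bar>
    \<le> (\<Sum>j\<in>J. \<Sum>k\<in>J. max (x j) 0 * max (- x k) 0 * \<bar>a j - a k\<bar>)"
proof -
  have "(\<Sum>j\<in>J. max (x j) 0) * \<bar>\<Sum>j\<in>J. a j * x j\<bar>
      = \<bar>(\<Sum>j\<in>J. max (x j) 0) * (\<Sum>j\<in>J. a j * x j)\<bar>"
    by (simp add: abs_mult sum_nonneg)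
  also have "\<dots> = \<bar>\<Sum>j\<in>J. \<Sum>k\<in>J. max (x j) 0 * max (- x k) 0 * (a j - a k)\<bar>"
    by (simp only: pos_part_mass_mult_sum_eq[OF assms])
  also have "\<dots> \<le> (\<Sum>j\<in>J. \<Sum>k\<in>J. \<bar>max (x j) 0 * max (- x k) 0 * (a j - a k)\<bar>)"
    by (rule order_trans[OF sum_abs sum_mono[OF sum_abs]])
  also have "\<dots> = (\<Sum>j\<in>J. \<Sum>k\<in>J. max (x j) 0 * max (- x k) 0 * \<bar>a j - a k\<bar>)"
    by (simp add: abs_mult)
  finally show ?thesis .
qed

lemma l1norm_matvec_le:
  fixes P :: "nat \<Rightarrow> nat \<Rightarrow> real" and x :: "nat \<Rightarrow> real"
  assumes nonneg: "\<And>i j. i \<le> m \<Longrightarrow> j \<le> d \<Longrightarrow> P i j \<ge> 0"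
    and stochastic: "\<And>j. j \<le> d \<Longrightarrow> (\<Sum>i\<le>m. P i j) = 1"
    and overlap: "\<And>j1 j2. j1 \<le> d \<Longrightarrow> j2 \<le> d \<Longrightarrow> \<exists>i0\<le>m. P i0 j1 \<ge> \<theta> \<and> P i0 j2 \<ge> \<theta>"
    and zero_sum: "(\<Sum>j\<le>d. x j) = 0"
  shows "l1norm m (matvec m d P x) \<le> (1 - \<theta>) * l1norm d x"
proof -
  define xp where "xp j = max (x j) 0" for j
  define xn where "xn j = max (- x j) 0" for j
  define S where "S = (\<Sum>j\<le>d. xp j)"
  have norm_x: "l1norm d x = 2 * S"
    unfolding l1norm_def S_def xp_def by (rule sum_abs_eq_twice_sum_pos_part[OF zero_sum])
  have mass: "(\<Sum>k\<le>d. xn k) = S"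
    unfolding S_def xp_def xn_def by (rule sum_neg_part_eq_sum_pos_part[OF zero_sum])
  have column_dist: "(\<Sum>i\<le>m. \<bar>P i j - P i k\<bar>) \<le> 2 - 2 * \<theta>" if "j \<le> d" "k \<le> d" for j k
    using overlap[OF that] that nonneg stochastic by (auto intro!: sum_abs_diff_le_overlap)
  have "S * l1norm m (matvec m d P x) = (\<Sum>i\<le>m. S * \<bar>\<Sum>j\<le>d. P i j * x j\<bar>)"
    by (simp add: l1norm_def matvec_def sum_distrib_left)
  also have "\<dots> \<le> (\<Sum>i\<le>m. \<Sum>j\<le>d. \<Sum>k\<le>d. xp j * xn k * \<bar>P i j - P i k\<bar>)"
    unfolding S_def xp_def xn_def
    by (intro sum_mono pos_part_mass_mult_abs_sum_le zero_sum)
  also have "\<dots> = (\<Sum>j\<le>d. \<Sum>k\<le>d. xp j * xn k * (\<Sum>i\<le>m. \<bar>P i j - P i k\<bar>))"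
    by (simp add: sum_distrib_left sum.swap[of _ "atMost m"])
  also have "\<dots> \<le> (\<Sum>j\<le>d. \<Sum>k\<le>d. xp j * xn k * (2 - 2 * \<theta>))"
    by (intro sum_mono mult_left_mono column_dist) (auto simp: xp_def xn_def)
  also have "\<dots> = S * S * (2 - 2 * \<theta>)"
    by (simp add: sum_product[symmetric] sum_distrib_right[symmetric] mass S_def)
  finally have scaled: "S * l1norm m (matvec m d P x) \<le> S * ((1 - \<theta>) * l1norm d x)"
    by (simp add: norm_x algebra_simps)
  show ?thesis
  proof (cases "S = 0")
    case True
    then have "\<bar>x j\<bar> = 0" if "j \<le> d" for j
      using norm_x that sum_nonneg_eq_0_iff[of "{..d}" "\<lambda>j. \<bar>x j\<bar>"]
      by (simp add: l1norm_def)
    then have "matvec m d P x = (\<lambda>_. 0)"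
      by (auto simp: matvec_def)
    then show ?thesis
      using True norm_x by (simp add: l1norm_def)
  next
    case False
    moreover have "S \<ge> 0"
      by (simp add: S_def xp_def sum_nonneg)
    ultimately show ?thesis
      using scaled by (simp add: mult_le_cancel_left)
  qed
qed

lemma l1norm_pos_if_nonzero:
  assumes "x \<in> zero_sum_space d" and "x \<noteq> (\<lambda>_. 0)"
  shows "l1norm d x > 0"
proof -
  obtain j where "x j \<noteq> 0"
    using assms(2) by auto
  with assms(1) have "j \<le> d"
    unfolding zero_sum_space_def using not_le by blast
  with \<open>x j \<noteq> 0\<close> have "0 < \<bar>x j\<bar>" "\<bar>x j\<bar> \<le> l1norm d x"
    unfolding l1norm_def by (auto intro: member_le_sum)
  then show ?thesis
    by linarith
qed

lemma zero_sum_space_nontrivial: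
  assumes "d \<ge> 1"
  shows "zero_sum_space d - {(\<lambda>_. 0)} \<noteq> {}"
proof -
  define e :: "nat \<Rightarrow> real" where "e j = (if j = 0 then 1 else if j = 1 then -1 else 0)" for j
  have "e \<in> zero_sum_space d"
    using assms unfolding zero_sum_space_def e_def by (auto simp: sum.If_cases atMost_def)
  moreover have "e \<noteq> (\<lambda>_. 0)"
    by (metis e_def one_neq_zero)
  ultimately show ?thesis
    by blast
qed

theorem lemma4p6:
  fixes m d :: nat and P :: "nat \<Rightarrow> nat \<Rightarrow> real" and \<theta> :: real
  assumes "d \<ge> 1"
    and "\<And>i j. i \<le> m \<Longrightarrow> j \<le> d \<Longrightarrow> P i j \<ge> 0"
    and "\<And>j. j \<le> d \<Longrightarrow> (\<Sum>i\<le>m. P i j) = 1"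
    and "\<theta> > 0"
    and "\<And>j1 j2. j1 \<le> d \<Longrightarrow> j2 \<le> d \<Longrightarrow> \<exists>i0\<le>m. P i0 j1 \<ge> \<theta> \<and> P i0 j2 \<ge> \<theta>"
  shows "opnorm0 m d P \<le> 1 - \<theta> / real d"
  unfolding opnorm0_def
proof (rule cSUP_least[OF zero_sum_space_nontrivial[OF assms(1)]])
  fix x
  assume x: "x \<in> zero_sum_space d - {(\<lambda>_. 0)}"
  then have "l1norm m (matvec m d P x) \<le> (1 - \<theta>) * l1norm d x"
    by (intro l1norm_matvec_le[OF assms(2,3,5)]) (auto simp: zero_sum_space_def)
  also have "\<dots> \<le> (1 - \<theta> / real d) * l1norm d x"
    using assms(1,4) by (intro mult_right_mono) (auto simp: divide_le_eq l1norm_def)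
  finally show "l1norm m (matvec m d P x) / l1norm d x \<le> 1 - \<theta> / real d"
    using l1norm_pos_if_nonzero x by (auto simp: pos_divide_le_eq)
qed

end
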